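(* Let $\mu>1/2$, $0<\nu<1/2$. Let $\mathfrak F\in C^1(\mathbb{R})$ be such that $\mathfrak F'$ is even, nonnegative, and decreasing on $[0,\infty)$, and $\mathfrak F(\infty)-\mathfrak F(-\infty)=(\mu-\nu)\pi$. Then the function $x\mapsto H\mathfrak F(x)-H\mathfrak F(0)$ is even on $\mathbb{R}$ and increasing on $[0,\infty)$. Moreover, for all $y>x\ge0$, $$0\le H\mathfrak F(y)-H\mathfrak F(x)=\frac1\pi\int_x^y\frac{\mathfrak F(\gamma)-\mathfrak F(-\gamma)}{\gamma}\,d\gamma+\mathfrak R(x,y),\qquad\text{where } -2(\mu-\nu)\le\mathfrak R(x,y)\le 2(\mu-\nu).$$
   Context: Since $\mathfrak F$ does not decay at infinity, differences of its Hilbert transform are defined by $H\mathfrak F(y)-H\mathfrak F(x):=\frac1\pi\int_0^\infty\frac{\mathfrak F(y-\gamma)-\mathfrak F(y+\gamma)-\mathfrak F(x-\gamma)+\mathfrak F(x+\gamma)}{\gamma}\,d\gamma$, consistent with the Hilbert transform $Hf(x)=\frac1\pi\mathrm{p.v.}\int\frac{f(y)}{x-y}dy=\frac1\pi\int_0^\infty\frac{f(x-\gamma)-f(x+\gamma)}{\gamma}d\gamma$. *)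

theory Defs
  imports "HOL-Analysis.Analysis"
begin

text \<open>Difference of Hilbert transforms, H F(y) - H F(x), as defined in the paper
  (Henstock-Kurzweil integral over (0, infinity)).\<close>
definition HFdiff :: "(real \<Rightarrow> real) \<Rightarrow> real \<Rightarrow> real \<Rightarrow> real" where
  "HFdiff F x y = (1 / pi) * integral {0<..}
     (\<lambda>\<gamma>. (F (y - \<gamma>) - F (y + \<gamma>) - F (x - \<gamma>) + F (x + \<gamma>)) / \<gamma>)"

end

theory Submission
  imports Defs
begin

(* Let F be C^1 with F' = f even, nonnegative and decreasing on [0,oo),
   and F(oo) = F 0 + K.  Then F is "sigmoid": odd about (0, F 0), increasing, concave on
   [0,oo), and F(oo) - F(-oo) = 2K.  Writing g(x,y,c) for the integrand of H F(y) - H F(x)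
   and psi c = (F c - F(-c))/c, we split (0,oo) into (0,x], (x,y] and (y,oo):
   - on (0,x] and (y,oo), 0 <= g is dominated by explicit majorants (built from the
     concavity bound F b - F a <= (b-a)/a K) whose integrals are K(2/3 + ln 4) and at
     most K(1 + ln 2);
   - on (x,y], 0 <= psi - g is dominated by the sum of the same two majorants.
   Since (2/3 + ln 4) + (1 + ln 2) <= 4, the difference between pi (H F(y) - H F(x)) and
   the integral of psi over [x,y] is at most 4K = 2 (mu - nu) pi in absolute value.
   Evenness comes from the oddness of F, monotonicity from additivity in (x,y) and
   nonnegativity of g.  The file first collects general integration facts, then the
   majorants and their integrals, then the pointwise estimates for F (a locale), the
   region estimates, and finally the theorem. *)

lemma has_integral_insert_iff:
  fixes h :: "real \<Rightarrow> real"
  shows "(h has_integral I) (insert a S) \<longleftrightarrow> (h has_integral I) S"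
  by (rule has_integral_spike_set_eq; rule negligible_subset[OF negligible_sing[of a]]) auto

lemma integral_bounds_by_majorant:
  fixes h U :: "real \<Rightarrow> real"
  assumes cont: "continuous_on S h" and S: "S \<in> sets lebesgue" and U: "U integrable_on S"
    and lower: "\<And>c. c \<in> S \<Longrightarrow> 0 \<le> h c" and upper: "\<And>c. c \<in> S \<Longrightarrow> h c \<le> U c"
  shows "h integrable_on S" "0 \<le> integral S h" "integral S h \<le> integral S U"
proof -
  have meas: "h \<in> borel_measurable (lebesgue_on S)"
    by (rule continuous_imp_measurable_on_sets_lebesgue[OF cont S])
  show int: "h integrable_on S"
    by (rule measurable_bounded_by_integrable_imp_integrable_real[OF meas U _ S])
       (use lower upper in force)
  show "0 \<le> integral S h" by (rule integral_nonneg[OF int lower])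
  show "integral S h \<le> integral S U" by (rule integral_le[OF int U upper])
qed

lemma integrable_on_subset_nonneg:
  fixes U :: "real \<Rightarrow> real"
  assumes U: "U integrable_on T" and nonneg: "\<And>c. c \<in> T \<Longrightarrow> 0 \<le> U c"
    and sub: "S \<subseteq> T" and S: "S \<in> sets lebesgue"
  shows "U integrable_on S" "integral S U \<le> integral T U"
proof -
  have "U absolutely_integrable_on T"
    by (rule nonnegative_absolutely_integrable_1[OF U nonneg])
  then have "U absolutely_integrable_on S"
    using set_integrable_subset[OF _ S sub] by blast
  then show int: "U integrable_on S" using set_lebesgue_integral_eq_integral(1) by blast
  show "integral S U \<le> integral T U"
    by (rule integral_subset_le[OF sub int U]) (use nonneg in blast)
qed

lemma has_integral_inverse:
  fixes K a b :: real
  assumes "0 < a" "a \<le> b"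
  shows "((\<lambda>c. K / c) has_integral K * (ln b - ln a)) {a..b}"
proof -
  have "((\<lambda>c. K / c) has_integral K * ln b - K * ln a) {a..b}"
  proof (rule fundamental_theorem_of_calculus[OF \<open>a \<le> b\<close>])
    fix c assume "c \<in> {a..b}"
    then have "0 < c" using assms by auto
    then have "((\<lambda>c. K * ln c) has_real_derivative K * inverse c) (at c)"
      by (intro DERIV_cmult DERIV_ln)
    then show "((\<lambda>c. K * ln c) has_vector_derivative K / c) (at c within {a..b})"
      by (simp add: has_real_derivative_iff_has_vector_derivative[symmetric]
          divide_inverse has_field_derivative_at_within)
  qed
  then show ?thesis by (simp add: right_diff_distrib)
qed

text \<open>The numerical inequality making the constants fit: (2/3 + ln 4) + (1 + ln 2) \<le> 4,
  which follows from ln 2 \<le> 7/9.\<close>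
lemma majorant_constants_le_4: "(2/3 + ln 4) + (ln 2 + 1) \<le> (4::real)"
proof -
  have "1 + 7/9 + (7/9)\<^sup>2 / 2 \<le> exp (7/9::real)" by (rule exp_lower_Taylor_quadratic) simp
  then have "2 \<le> exp (7/9::real)" by (simp add: power2_eq_square)
  then have "ln 2 \<le> (7/9::real)" by (metis exp_gt_zero ln_exp ln_le_cancel_iff zero_less_numeral)
  moreover have "ln (4::real) = 2 * ln 2" using ln_mult[of 2 2] by simp
  ultimately show ?thesis by simp
qed

section \<open>Two majorants and their integrals\<close>

text \<open>Majorant near the origin, for c \<in> (0,a]: like 2K/(a - c) for small c and K/c otherwise.\<close>
definition near_majorant :: "real \<Rightarrow> real \<Rightarrow> real \<Rightarrow> real" where
  "near_majorant K a c = (if c \<le> a / 4 then 8 * K / (3 * a) else K / c)"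

definition far_majorant :: "real \<Rightarrow> real \<Rightarrow> real \<Rightarrow> real \<Rightarrow> real" where
  "far_majorant K a b c = (if c \<le> a + b then K / c else (a + b) * K / c\<^sup>2)"

lemma near_majorant_nonneg: "0 \<le> K \<Longrightarrow> 0 < a \<Longrightarrow> 0 < c \<Longrightarrow> 0 \<le> near_majorant K a c"
  by (simp add: near_majorant_def)

lemma far_majorant_nonneg: "0 \<le> K \<Longrightarrow> 0 \<le> a + b \<Longrightarrow> 0 < c \<Longrightarrow> 0 \<le> far_majorant K a b c"
  by (simp add: far_majorant_def)

lemma near_majorant_integral:
  assumes "0 < a"
  shows "(near_majorant K a has_integral K * (2/3 + ln 4)) {0<..a}"
proof -
  have "((\<lambda>c. 8 * K / (3 * a)) has_integral 8 * K / (3 * a) * (a/4 - 0)) {0..a/4}"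
    using has_integral_const_real[of "8 * K / (3 * a)" 0 "a/4"] assms by simp
  then have const: "(near_majorant K a has_integral 8 * K / (3 * a) * (a/4 - 0)) {0..a/4}"
    by (rule has_integral_eq[rotated]) (auto simp: near_majorant_def)
  have inverse: "(near_majorant K a has_integral K * (ln a - ln (a/4))) {a/4..a}"
    by (rule has_integral_spike[OF negligible_sing[of "a/4"] _ has_integral_inverse])
       (use assms in \<open>auto simp: near_majorant_def\<close>)
  have "(near_majorant K a has_integral 8 * K / (3 * a) * (a/4 - 0) + K * (ln a - ln (a/4)))
          ({0..a/4} \<union> {a/4..a})"
    by (rule has_integral_Un[OF const inverse]) (rule negligible_subset[OF negligible_sing[of "a/4"]], auto)
  moreover have "{0..a/4} \<union> {a/4..a} = insert 0 {0<..a}" using assms by auto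
  moreover have "8 * K / (3 * a) * (a/4 - 0) + K * (ln a - ln (a/4)) = K * (2/3 + ln 4)"
    using assms by (simp add: ln_div field_simps)
  ultimately show ?thesis by (simp add: has_integral_insert_iff)
qed

lemma far_majorant_integral:
  assumes "0 < a" "0 \<le> b"
  shows "(far_majorant K a b has_integral K * (ln (a + b) - ln a) + K) {a<..}"
proof -
  have inverse: "(far_majorant K a b has_integral K * (ln (a + b) - ln a)) {a..a+b}"
    by (rule has_integral_eq[OF _ has_integral_inverse]) (use assms in \<open>auto simp: far_majorant_def\<close>)
  have "((\<lambda>c. 1 / c ^ 2) has_integral 1 / (a + b)) {a+b..}"
    using has_integral_inverse_power_to_inf[of 2 "a + b"] assms by simp
  from has_integral_mult_right[OF this, of "(a + b) * K"]
  have "((\<lambda>c. (a + b) * K * (1 / c ^ 2)) has_integral K) {a+b..}"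
    using assms by simp
  then have tail: "(far_majorant K a b has_integral K) {a+b..}"
    by (rule has_integral_eq[rotated]) (use assms in \<open>auto simp: far_majorant_def power2_eq_square\<close>)
  have "(far_majorant K a b has_integral K * (ln (a + b) - ln a) + K) ({a..a+b} \<union> {a+b..})"
    by (rule has_integral_Un[OF inverse tail]) (rule negligible_subset[OF negligible_sing[of "a+b"]], auto)
  moreover have "{a..a+b} \<union> {a+b..} = insert a {a<..}" using assms by auto
  ultimately show ?thesis by (simp add: has_integral_insert_iff)
qed

lemma far_majorant_integral_le:
  assumes K: "0 \<le> K" and b: "0 \<le> b" "b \<le> a"
  shows "far_majorant K a b integrable_on {a<..}" "integral {a<..} (far_majorant K a b) \<le> K * (ln 2 + 1)"
proof -
  consider "a = 0" | "0 < a" using b by linarith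
  then have "far_majorant K a b integrable_on {a<..} \<and>
      integral {a<..} (far_majorant K a b) \<le> K * (ln 2 + 1)"
  proof cases
    case 1
    then have "(far_majorant K a b has_integral 0) {a<..}"
      using b by (intro has_integral_eq[OF _ has_integral_0]) (auto simp: far_majorant_def)
    then show ?thesis using K by (auto simp: integral_unique)
  next
    case 2
    have "ln (a + b) \<le> ln (2 * a)"
      using 2 b by (subst ln_le_cancel_iff) auto
    then have "ln (a + b) \<le> ln 2 + ln a"
      using 2 by (simp add: ln_mult)
    then have "K * (ln (a + b) - ln a) \<le> K * ln 2"
      using K by (intro mult_left_mono) auto
    then have "K * (ln (a + b) - ln a) + K \<le> K * (ln 2 + 1)"
      by (simp add: distrib_left)
    then show ?thesis
      using far_majorant_integral[OF 2 b(1), of K] by (auto simp: integral_unique)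
  qed
  then show "far_majorant K a b integrable_on {a<..}"
    "integral {a<..} (far_majorant K a b) \<le> K * (ln 2 + 1)" by auto
qed

section \<open>Sigmoid profiles\<close>

text \<open>F has an even, nonnegative derivative f that decreases on [0,oo), and F tends to
  F 0 + K at +oo.  These are the hypotheses of the theorem, with K = (mu - nu) pi / 2.\<close>
locale sigmoid =
  fixes F f :: "real \<Rightarrow> real" and K :: real
  assumes deriv: "\<And>x. (F has_real_derivative f x) (at x)"
    and even: "\<And>x. f (- x) = f x"
    and nonneg: "\<And>x. 0 \<le> f x"
    and antimono: "antimono_on {0..} f"
    and lim_top: "(F \<longlongrightarrow> F 0 + K) at_top"
begin

lemma F_mono: "a \<le> b \<Longrightarrow> F a \<le> F b"
  by (rule DERIV_nonneg_imp_nondecreasing) (use deriv nonneg in blast)+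

lemma F_le_sup: "F t \<le> F 0 + K"
  by (rule tendsto_lowerbound[OF lim_top])
     (use F_mono in \<open>auto simp: eventually_at_top_linorder\<close>)

lemma K_nonneg: "0 \<le> K"
  using F_le_sup[of 0] by simp

text \<open>Since f is even, F is odd about the point (0, F 0).\<close>
lemma F_odd: "F (- t) = 2 * F 0 - F t"
proof -
  have "((\<lambda>t. F t + F (- t)) has_real_derivative 0) (at x)" for x
  proof -
    have "((\<lambda>t. F (- t)) has_real_derivative f (- x) * (- 1)) (at x)"
      by (rule DERIV_chain2[OF deriv]) (auto intro!: derivative_eq_intros)
    from DERIV_add[OF deriv this] show ?thesis using even[of x] by simp
  qed
  then show ?thesis using DERIV_isconst_all[of "\<lambda>t. F t + F (- t)" t 0] by simp
qed

lemma lim_bot: "(F \<longlongrightarrow> F 0 - K) at_bot"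
proof -
  have "((\<lambda>t. 2 * F 0 - F (- t)) \<longlongrightarrow> 2 * F 0 - (F 0 + K)) at_bot"
    by (intro tendsto_diff tendsto_const filterlim_compose[OF lim_top filterlim_uminus_at_top_at_bot])
  moreover have "(\<lambda>t. 2 * F 0 - F (- t)) = F" using F_odd by (auto simp: fun_eq_iff)
  ultimately show ?thesis by simp
qed

lemma F_continuous: "continuous_on S F"
  using DERIV_isCont[OF deriv] by (simp add: continuous_at_imp_continuous_on)

lemma continuous_on_F_comp [continuous_intros]:
  "continuous_on S h \<Longrightarrow> continuous_on S (\<lambda>x. F (h x))"
  using continuous_on_compose2[OF F_continuous _ subset_UNIV] by blast

text \<open>Mean value bounds on [0,oo), where f decreases: F is concave there.\<close>
lemma increment_between_derivs:
  assumes "0 \<le> a" "a \<le> b"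
  shows "(b - a) * f b \<le> F b - F a" "F b - F a \<le> (b - a) * f a"
proof -
  have "\<exists>z. a \<le> z \<and> z \<le> b \<and> F b - F a = (b - a) * f z"
  proof (cases "a = b")
    case False
    then have "a < b" using assms by simp
    from MVT2[OF this, of F f] deriv obtain z where "a < z" "z < b" "F b - F a = (b - a) * f z"
      by blast
    then show ?thesis by (intro exI[of _ z]) auto
  qed auto
  then obtain z where z: "a \<le> z" "z \<le> b" "F b - F a = (b - a) * f z" by blast
  have "f b \<le> f z" "f z \<le> f a"
    using antimono z assms by (auto simp: monotone_on_def)
  then show "(b - a) * f b \<le> F b - F a" "F b - F a \<le> (b - a) * f a"
    using z assms by (simp_all add: mult_left_mono)
qed

lemma increment_le_K: "0 \<le> a \<Longrightarrow> F b - F a \<le> K"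
  using F_le_sup[of b] F_mono[of 0 a] by simp

lemma increment_le_ratio:
  assumes "0 < a" "a \<le> b"
  shows "F b - F a \<le> (b - a) / a * K"
proof -
  have "F b - F a \<le> (b - a) * f a" using increment_between_derivs assms by simp
  also have "\<dots> = (b - a) / a * (a * f a)" using assms by (simp add: field_simps)
  also have "\<dots> \<le> (b - a) / a * (F a - F 0)"
    using increment_between_derivs(1)[of 0 a] assms by (intro mult_left_mono) auto
  also have "\<dots> \<le> (b - a) / a * K"
    using F_le_sup[of a] assms by (intro mult_left_mono) auto
  finally show ?thesis .
qed

text \<open>Symmetric increments F (t + c) - F (t - c) decrease in t \<ge> 0, since f (t + c) \<le> f (t - c).\<close>
lemma symmetric_increment_antimono:
  assumes "0 \<le> x" "x \<le> y" "0 \<le> c"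
  shows "F (y + c) - F (y - c) \<le> F (x + c) - F (x - c)"
proof -
  have "(\<lambda>t. F (t + c) - F (t - c)) y \<le> (\<lambda>t. F (t + c) - F (t - c)) x"
  proof (rule DERIV_nonpos_imp_nonincreasing[OF assms(2)])
    fix t assume t: "x \<le> t" "t \<le> y"
    have "((\<lambda>t. F (t + c) - F (t - c)) has_real_derivative f (t + c) * 1 - f (t - c) * 1) (at t)"
      by (intro DERIV_diff DERIV_chain2[OF deriv]) (auto intro!: derivative_eq_intros)
    moreover have "f (t + c) \<le> f \<bar>t - c\<bar>"
      using antimono t assms by (auto simp: monotone_on_def)
    moreover have "f \<bar>t - c\<bar> = f (t - c)" using even[of "t - c"] by (simp add: abs_if)
    ultimately show "\<exists>D. ((\<lambda>t. F (t + c) - F (t - c)) has_real_derivative D) (at t) \<and> D \<le> 0"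
      by auto
  qed
  then show ?thesis by simp
qed

lemma near_majorant_bound:
  assumes "0 < c" "c \<le> a"
  shows "(F (a + c) - F (a - c)) / c \<le> near_majorant K a c"
proof (cases "c \<le> a / 4")
  case True
  have "(F (a + c) - F (a - c)) / c \<le> (2 * c / (a - c) * K) / c"
    using increment_le_ratio[of "a - c" "a + c"] True assms by (intro divide_right_mono) auto
  also have "\<dots> = 2 * K / (a - c)" using assms True by (simp add: field_simps)
  also have "\<dots> \<le> 8 * K / (3 * a)"
  proof -
    have "K * (8 * c) \<le> K * (2 * a)" using K_nonneg True by (intro mult_left_mono) auto
    then show ?thesis using True assms by (simp add: divide_simps algebra_simps)
  qed
  finally show ?thesis using True by (simp add: near_majorant_def)
next
  case False
  then show ?thesis
    using increment_le_K[of "a - c" "a + c"] assms by (simp add: near_majorant_def divide_right_mono)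
qed

lemma far_majorant_bound:
  assumes "0 \<le> a" "a \<le> c" "0 < c" "0 \<le> b"
  shows "(F (c - a + b) - F (c - a)) / c \<le> far_majorant K a b c"
proof (cases "c \<le> a + b")
  case True
  then show ?thesis
    using increment_le_K[of "c - a" "c - a + b"] assms by (simp add: far_majorant_def divide_right_mono)
next
  case False
  have "(F (c - a + b) - F (c - a)) / c \<le> (b / (c - a) * K) / c"
    using increment_le_ratio[of "c - a" "c - a + b"] False assms by (intro divide_right_mono) auto
  also have "\<dots> = b * c * K / ((c - a) * c\<^sup>2)" using False assms by (simp add: field_simps power2_eq_square)
  also have "\<dots> \<le> (a + b) * (c - a) * K / ((c - a) * c\<^sup>2)"
  proof -
    have "0 \<le> a * (c - a - b)" using False assms by simp
    then have "b * c \<le> (a + b) * (c - a)" by (simp add: algebra_simps)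
    then show ?thesis using False assms K_nonneg by (intro divide_right_mono mult_right_mono) auto
  qed
  also have "\<dots> = (a + b) * K / c\<^sup>2" using False assms by simp
  finally show ?thesis using False by (simp add: far_majorant_def)
qed

text \<open>The integrand of pi (H F(y) - H F(x)) and the quotient psi whose integral over [x,y]
  approximates it.\<close>
definition integrand :: "real \<Rightarrow> real \<Rightarrow> real \<Rightarrow> real" where
  "integrand x y = (\<lambda>c. (F (y - c) - F (y + c) - F (x - c) + F (x + c)) / c)"

definition psi :: "real \<Rightarrow> real" where
  "psi = (\<lambda>c. (F c - F (- c)) / c)"

lemma HFdiff_eq: "HFdiff F x y = (1 / pi) * integral {0<..} (integrand x y)"
  by (simp add: HFdiff_def integrand_def)

lemma continuous_on_integrand: "S \<subseteq> {0<..} \<Longrightarrow> continuous_on S (integrand x y)"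
  unfolding integrand_def by (intro continuous_intros) auto

lemma continuous_on_psi: "S \<subseteq> {0<..} \<Longrightarrow> continuous_on S psi"
  unfolding psi_def by (intro continuous_intros) auto

lemma integrand_nonneg:
  "0 \<le> x \<Longrightarrow> x \<le> y \<Longrightarrow> 0 < c \<Longrightarrow> 0 \<le> integrand x y c"
  using symmetric_increment_antimono[of x y c] by (simp add: integrand_def)

lemma integrand_inner_bound:
  assumes "0 < c" "c \<le> x" "x \<le> y"
  shows "integrand x y c \<le> near_majorant K x c"
proof -
  have "integrand x y c \<le> (F (x + c) - F (x - c)) / c"
    using F_mono[of "y - c" "y + c"] assms by (simp add: integrand_def divide_right_mono)
  also have "\<dots> \<le> near_majorant K x c" by (rule near_majorant_bound) (use assms in auto)
  finally show ?thesis .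
qed

lemma integrand_outer_bound:
  assumes "0 \<le> x" "x \<le> y" "y \<le> c" "0 < c"
  shows "integrand x y c \<le> far_majorant K y (y - x) c"
proof -
  have "integrand x y c \<le> (F (c - y + (y - x)) - F (c - y)) / c"
    using F_odd[of "c - y"] F_odd[of "c - x"] F_mono[of "x + c" "y + c"] assms
    by (simp add: integrand_def divide_right_mono)
  also have "\<dots> \<le> far_majorant K y (y - x) c" by (rule far_majorant_bound) (use assms in auto)
  finally show ?thesis .
qed

lemma psi_bounds: "0 < c \<Longrightarrow> 0 \<le> psi c \<and> psi c \<le> 2 * f 0"
  using increment_between_derivs[of 0 c] F_odd[of c] F_mono[of 0 c]
  by (simp add: psi_def divide_simps mult.commute)

text \<open>On the middle region, psi - integrand splits into a symmetric increment around y
  (controlled by the near majorant) and a concavity defect at c (controlled by the far one).\<close>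
lemma psi_minus_integrand_bounds:
  assumes "0 \<le> x" "x \<le> c" "c \<le> y" "0 < c"
  shows "0 \<le> psi c - integrand x y c"
    "psi c - integrand x y c \<le> near_majorant K y c + far_majorant K x x c"
proof -
  define near where "near = (F (y + c) - F (y - c)) / c"
  define defect where "defect = (2 * F c - F (c - x) - F (c + x)) / c"
  have numerator: "F c - F (- c) - (F (y - c) - F (y + c) - F (x - c) + F (x + c))
      = (F (y + c) - F (y - c)) + (2 * F c - F (c - x) - F (c + x))"
    using F_odd[of c] F_odd[of "c - x"] by (simp add: algebra_simps)
  have "psi c - integrand x y c = (F c - F (- c) - (F (y - c) - F (y + c) - F (x - c) + F (x + c))) / c"
    by (simp add: psi_def integrand_def diff_divide_distrib)
  also have "\<dots> = near + defect"
    unfolding numerator near_def defect_def by (rule add_divide_distrib)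
  finally have split: "psi c - integrand x y c = near + defect" .
  have "0 \<le> near" using F_mono[of "y - c" "y + c"] assms by (simp add: near_def)
  moreover have "0 \<le> defect"
    using increment_between_derivs[of c "c + x"] increment_between_derivs[of "c - x" c] assms
    by (simp add: defect_def)
  ultimately show "0 \<le> psi c - integrand x y c" using split by simp
  have "near \<le> near_majorant K y c"
    unfolding near_def by (rule near_majorant_bound) (use assms in auto)
  moreover have "defect \<le> (F (c - x + x) - F (c - x)) / c"
    using F_mono[of c "c + x"] assms by (simp add: defect_def divide_right_mono)
  moreover have "\<dots> \<le> far_majorant K x x c" by (rule far_majorant_bound) (use assms in auto)
  ultimately show "psi c - integrand x y c \<le> near_majorant K y c + far_majorant K x x c"
    using split by simp
qed

section \<open>Integral estimates on the three regions\<close>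

lemma inner_region:
  assumes "0 \<le> x" "x \<le> y"
  shows "integrand x y integrable_on {0<..x}" "0 \<le> integral {0<..x} (integrand x y)"
    "integral {0<..x} (integrand x y) \<le> K * (2/3 + ln 4)"
proof -
  have "near_majorant K x integrable_on {0<..x} \<and>
      integral {0<..x} (near_majorant K x) \<le> K * (2/3 + ln 4)"
  proof (cases "x = 0")
    case True
    then show ?thesis using K_nonneg by (simp add: integrable_on_empty)
  next
    case False
    then show ?thesis using near_majorant_integral[of x K] assms by (auto simp: integral_unique)
  qed
  then have majorant: "near_majorant K x integrable_on {0<..x}"
    "integral {0<..x} (near_majorant K x) \<le> K * (2/3 + ln 4)" by auto
  have "{0<..x} \<subseteq> {0<..}" "{0<..x} \<in> sets lebesgue" by auto
  moreover have "0 \<le> integrand x y c" "integrand x y c \<le> near_majorant K x c" if "c \<in> {0<..x}" for c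
    using integrand_nonneg integrand_inner_bound assms that by auto
  ultimately have "integrand x y integrable_on {0<..x}" "0 \<le> integral {0<..x} (integrand x y)"
    "integral {0<..x} (integrand x y) \<le> integral {0<..x} (near_majorant K x)"
    using integral_bounds_by_majorant[OF continuous_on_integrand _ majorant(1)] by blast+
  then show "integrand x y integrable_on {0<..x}" "0 \<le> integral {0<..x} (integrand x y)"
    "integral {0<..x} (integrand x y) \<le> K * (2/3 + ln 4)"
    using majorant(2) by auto
qed

lemma outer_region:
  assumes "0 \<le> x" "x \<le> y"
  shows "integrand x y integrable_on {y<..}" "0 \<le> integral {y<..} (integrand x y)"
    "integral {y<..} (integrand x y) \<le> K * (ln 2 + 1)"
proof -
  have "0 \<le> y - x" "y - x \<le> y" using assms by auto
  note majorant = far_majorant_integral_le[OF K_nonneg this]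
  have "{y<..} \<subseteq> {0<..}" "{y<..} \<in> sets lebesgue" using assms by auto
  moreover have "0 \<le> integrand x y c" "integrand x y c \<le> far_majorant K y (y - x) c"
    if "c \<in> {y<..}" for c
    using integrand_nonneg integrand_outer_bound assms that by auto
  ultimately have "integrand x y integrable_on {y<..}" "0 \<le> integral {y<..} (integrand x y)"
    "integral {y<..} (integrand x y) \<le> integral {y<..} (far_majorant K y (y - x))"
    using integral_bounds_by_majorant[OF continuous_on_integrand _ majorant(1)] by blast+
  then show "integrand x y integrable_on {y<..}" "0 \<le> integral {y<..} (integrand x y)"
    "integral {y<..} (integrand x y) \<le> K * (ln 2 + 1)"
    using majorant(2) by auto
qed

text \<open>On the middle region the integrand is compared with psi rather than with 0.\<close>
lemma middle_region:
  assumes "0 \<le> x" "x < y"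
  shows "psi integrable_on {x<..y}" "integrand x y integrable_on {x<..y}"
    "0 \<le> integral {x<..y} psi - integral {x<..y} (integrand x y)"
    "integral {x<..y} psi - integral {x<..y} (integrand x y) \<le> K * (2/3 + ln 4) + K * (ln 2 + 1)"
proof -
  have region: "{x<..y} \<subseteq> {0<..}" "{x<..y} \<in> sets lebesgue" using assms by auto
  have "(\<lambda>c. 2 * f 0) integrable_on {x<..y}"
    by (rule integrable_on_subset_nonneg(1)[OF integrable_const_ivl[of "2 * f 0" x y]])
       (use nonneg[of 0] in auto)
  then show psi: "psi integrable_on {x<..y}"
    using integral_bounds_by_majorant(1)[OF continuous_on_psi[OF region(1)] region(2)] psi_bounds region(1)
    by blast
  have "0 \<le> integrand x y c" "integrand x y c \<le> psi c" if "c \<in> {x<..y}" for c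
    using integrand_nonneg psi_minus_integrand_bounds(1)[of x c y] assms that by auto
  then show g: "integrand x y integrable_on {x<..y}"
    using integral_bounds_by_majorant(1)[OF continuous_on_integrand[OF region(1)] region(2) psi] by blast
  have near: "near_majorant K y integrable_on {x<..y}"
    "integral {x<..y} (near_majorant K y) \<le> K * (2/3 + ln 4)"
  proof -
    have majorant: "(near_majorant K y has_integral K * (2/3 + ln 4)) {0<..y}"
      using near_majorant_integral assms by simp
    have "0 \<le> near_majorant K y c" if "c \<in> {0<..y}" for c
      using near_majorant_nonneg[OF K_nonneg] assms that by simp
    moreover have "{x<..y} \<subseteq> {0<..y}" using assms by auto
    ultimately show "near_majorant K y integrable_on {x<..y}"
      "integral {x<..y} (near_majorant K y) \<le> K * (2/3 + ln 4)"
      using integrable_on_subset_nonneg[OF has_integral_integrable[OF majorant] _ _ region(2)]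
        integral_unique[OF majorant] by auto
  qed
  have far: "far_majorant K x x integrable_on {x<..y}"
    "integral {x<..y} (far_majorant K x x) \<le> K * (ln 2 + 1)"
  proof -
    note majorant = far_majorant_integral_le[OF K_nonneg assms(1) order_refl]
    have "0 \<le> far_majorant K x x c" if "c \<in> {x<..}" for c
      using far_majorant_nonneg[OF K_nonneg] assms that by simp
    then show "far_majorant K x x integrable_on {x<..y}"
      "integral {x<..y} (far_majorant K x x) \<le> K * (ln 2 + 1)"
      using integrable_on_subset_nonneg[OF majorant(1), of "{x<..y}"] majorant(2) region(2) assms
      by force+
  qed
  have "0 \<le> psi c - integrand x y c" "psi c - integrand x y c \<le> near_majorant K y c + far_majorant K x x c"
    if "c \<in> {x<..y}" for c
    using psi_minus_integrand_bounds[of x c y] assms that by auto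
  then have "0 \<le> integral {x<..y} (\<lambda>c. psi c - integrand x y c)"
    "integral {x<..y} (\<lambda>c. psi c - integrand x y c)
       \<le> integral {x<..y} (\<lambda>c. near_majorant K y c + far_majorant K x x c)"
    using integral_bounds_by_majorant(2,3)[OF continuous_on_diff[OF continuous_on_psi continuous_on_integrand]
        region(2) integrable_add[OF near(1) far(1)]] region(1) by blast+
  moreover have "integral {x<..y} (\<lambda>c. psi c - integrand x y c)
      = integral {x<..y} psi - integral {x<..y} (integrand x y)"
    by (rule integral_diff[OF psi g])
  moreover have "integral {x<..y} (\<lambda>c. near_majorant K y c + far_majorant K x x c)
      = integral {x<..y} (near_majorant K y) + integral {x<..y} (far_majorant K x x)"
    by (rule integral_add[OF near(1) far(1)])
  ultimately show "0 \<le> integral {x<..y} psi - integral {x<..y} (integrand x y)"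
    "integral {x<..y} psi - integral {x<..y} (integrand x y) \<le> K * (2/3 + ln 4) + K * (ln 2 + 1)"
    using near(2) far(2) by linarith+
qed

lemma integrand_split:
  assumes "0 \<le> x" "x < y"
  shows "(integrand x y has_integral
      integral {0<..x} (integrand x y) + integral {x<..y} (integrand x y) + integral {y<..} (integrand x y)) {0<..}"
proof -
  have "(integrand x y has_integral integral {0<..x} (integrand x y) + integral {x<..y} (integrand x y))
      ({0<..x} \<union> {x<..y})"
  proof (rule has_integral_Un)
    show "(integrand x y has_integral integral {0<..x} (integrand x y)) {0<..x}"
      using inner_region(1) assms by (simp add: integrable_integral)
    show "(integrand x y has_integral integral {x<..y} (integrand x y)) {x<..y}"
      using middle_region(2) assms by (simp add: integrable_integral)
    have "{0<..x} \<inter> {x<..y} = {}" by auto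
    then show "negligible ({0<..x} \<inter> {x<..y})" by simp
  qed
  moreover have "{0<..x} \<union> {x<..y} = {0<..y}" using assms by auto
  ultimately have "(integrand x y has_integral integral {0<..x} (integrand x y) + integral {x<..y} (integrand x y)
      + integral {y<..} (integrand x y)) ({0<..y} \<union> {y<..})"
  proof (intro has_integral_Un)
    show "(integrand x y has_integral integral {y<..} (integrand x y)) {y<..}"
      using outer_region(1) assms by (simp add: integrable_integral)
    have "{0<..y} \<inter> {y<..} = {}" by auto
    then show "negligible ({0<..y} \<inter> {y<..})" by simp
  qed simp
  moreover have "{0<..y} \<union> {y<..} = {0<..}" using assms by auto
  ultimately show ?thesis by simp
qed

lemma integrand_integrable:
  assumes "0 \<le> x" "x \<le> y"
  shows "integrand x y integrable_on {0<..}"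
proof (cases "x = y")
  case True
  then have "integrand x y = (\<lambda>c. 0)" by (simp add: integrand_def fun_eq_iff)
  then show ?thesis by (simp add: integrable_0)
next
  case False
  then show ?thesis using integrand_split[of x y] assms by auto
qed

lemma HFdiff_nonneg: "0 \<le> x \<Longrightarrow> x \<le> y \<Longrightarrow> 0 \<le> HFdiff F x y"
  unfolding HFdiff_eq
  by (intro mult_nonneg_nonneg integral_nonneg integrand_integrable) (auto intro: integrand_nonneg)

lemma HFdiff_additive:
  assumes "0 \<le> a" "a \<le> b"
  shows "HFdiff F 0 b = HFdiff F 0 a + HFdiff F a b"
proof -
  have "integrand 0 b = (\<lambda>c. integrand 0 a c + integrand a b c)"
    by (simp add: integrand_def fun_eq_iff add_divide_distrib[symmetric])
  then have "integral {0<..} (integrand 0 b) = integral {0<..} (integrand 0 a) + integral {0<..} (integrand a b)"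
    using integral_add[OF integrand_integrable[of 0 a] integrand_integrable[of a b]] assms by simp
  then show ?thesis unfolding HFdiff_eq by (simp add: distrib_left)
qed

lemma HFdiff_mono: "mono_on {0..} (HFdiff F 0)"
proof (rule monotone_onI)
  fix a b :: real assume "a \<in> {0..}" "b \<in> {0..}" "a \<le> b"
  then show "HFdiff F 0 a \<le> HFdiff F 0 b"
    using HFdiff_additive[of a b] HFdiff_nonneg[of a b] by simp
qed

text \<open>Evenness of x \<mapsto> H F(x) - H F(0) reflects the oddness of F about (0, F 0).\<close>
lemma HFdiff_even: "HFdiff F 0 (- x) = HFdiff F 0 x"
proof -
  have "integrand 0 (- x) c = integrand 0 x c" for c
  proof -
    have "- x - c = - (x + c)" "- x + c = - (x - c)" by simp_all
    then have "F (- x - c) = 2 * F 0 - F (x + c)" "F (- x + c) = 2 * F 0 - F (x - c)"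
      using F_odd by presburger+
    then show ?thesis by (simp add: integrand_def)
  qed
  then have "integrand 0 (- x) = integrand 0 x" by (rule ext)
  then show ?thesis by (simp add: HFdiff_eq)
qed

lemma HFdiff_remainder:
  assumes "0 \<le> x" "x < y"
  shows "\<bar>HFdiff F x y - (1 / pi) * integral {x..y} psi\<bar> \<le> 4 * K / pi"
proof -
  define D where "D = integral {0<..} (integrand x y) - integral {x..y} psi"
  have "(psi has_integral integral {x<..y} psi) (insert x {x<..y})"
    using middle_region(1)[OF assms] by (simp add: has_integral_insert_iff integrable_integral)
  moreover have "insert x {x<..y} = {x..y}" using assms by auto
  ultimately have "integral {x..y} psi = integral {x<..y} psi" by (simp add: integral_unique)
  then have "D = integral {0<..x} (integrand x y) + integral {y<..} (integrand x y)
      - (integral {x<..y} psi - integral {x<..y} (integrand x y))"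
    unfolding D_def using integral_unique[OF integrand_split[OF assms]] by simp
  then have "\<bar>D\<bar> \<le> K * (2/3 + ln 4) + K * (ln 2 + 1)"
    using inner_region[of x y] outer_region[of x y] middle_region[OF assms] assms by auto
  also have "\<dots> \<le> K * 4"
    using majorant_constants_le_4 K_nonneg by (simp add: distrib_left[symmetric] mult_left_mono)
  finally have "\<bar>D\<bar> / pi \<le> 4 * K / pi" by (simp add: divide_right_mono mult.commute)
  moreover have "HFdiff F x y - (1 / pi) * integral {x..y} psi = D / pi"
    by (simp add: HFdiff_eq D_def diff_divide_distrib)
  ultimately show ?thesis by simp
qed

end

theorem lemma5p7:
  fixes \<mu> \<nu> :: real and F f :: "real \<Rightarrow> real"
  assumes mu: "\<mu> > 1/2" and nu: "0 < \<nu>" "\<nu> < 1/2"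
    and deriv: "\<And>x. (F has_real_derivative f x) (at x)"
    and cont: "continuous_on UNIV f"
    and even: "\<And>x. f (- x) = f x"
    and nonneg: "\<And>x. f x \<ge> 0"
    and decr: "antimono_on {0..} f"
    and limits: "\<exists>Lp Lm. (F \<longlongrightarrow> Lp) at_top \<and> (F \<longlongrightarrow> Lm) at_bot \<and> Lp - Lm = (\<mu> - \<nu>) * pi"
  shows "(\<forall>x. HFdiff F 0 (- x) = HFdiff F 0 x)
       \<and> mono_on {0..} (\<lambda>x. HFdiff F 0 x)
       \<and> (\<forall>x y. 0 \<le> x \<and> x < y \<longrightarrow>
            0 \<le> HFdiff F x y \<and>
            (let R = HFdiff F x y - (1 / pi) * integral {x..y} (\<lambda>\<gamma>. (F \<gamma> - F (- \<gamma>)) / \<gamma>)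
             in - 2 * (\<mu> - \<nu>) \<le> R \<and> R \<le> 2 * (\<mu> - \<nu>)))"
proof -
  obtain Lp Lm where Lp: "(F \<longlongrightarrow> Lp) at_top" and Lm: "(F \<longlongrightarrow> Lm) at_bot"
    and jump: "Lp - Lm = (\<mu> - \<nu>) * pi" using limits by blast
  interpret sigmoid F f "Lp - F 0"
    by unfold_locales (use deriv even nonneg decr Lp in auto)
  text \<open>By oddness Lm = 2 F 0 - Lp, so the half-jump K = Lp - F 0 equals (mu - nu) pi / 2.\<close>
  have "Lm = F 0 - (Lp - F 0)" using tendsto_unique[OF _ lim_bot Lm] by simp
  then have K: "4 * (Lp - F 0) / pi = 2 * (\<mu> - \<nu>)" using jump by (simp add: field_simps)
  have "- 2 * (\<mu> - \<nu>) \<le> R \<and> R \<le> 2 * (\<mu> - \<nu>)"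
    if "0 \<le> x" "x < y" "R = HFdiff F x y - (1 / pi) * integral {x..y} (\<lambda>\<gamma>. (F \<gamma> - F (- \<gamma>)) / \<gamma>)"
    for x y R
    using HFdiff_remainder[OF that(1,2)] that(3) K unfolding psi_def by (simp add: abs_le_iff)
  then show ?thesis using HFdiff_even HFdiff_mono HFdiff_nonneg by (auto simp: Let_def)
qed

end
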